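(* Let $D$ be a rooted hyperbolic digraph with constant out-degree and bounded in-degree. Then every elliptic self-embedding of $D$ is an automorphism of $D$.
   Context: A directed path $x_0\ldots x_n$ has edges $x_ix_{i+1}$; $d(x,y)$ is the length of a shortest directed $x$-$y$ path ($\infty$ if none), called an $x$-$y$ geodesic. $D$ is rooted if some vertex $o$ satisfies $d(o,v)<\infty$ for all $v$. $\mathcal{B}^+_k(x)=\{y:d(x,y)\le k\}$, $\mathcal{B}^-_k(x)=\{y:d(y,x)\le k\}$, extended to sets by unions. A geodesic triangle consists of three vertices and for each pair a geodesic between them (in one direction); it is $\delta$-thin if whenever $P,Q,R$ are its sides with the start of $P$ being the start or end of $Q$ and the end of $P$ being the start or end of $R$, $P\subseteq\mathcal{B}^+_\delta(Q)\cup\mathcal{B}^-_\delta(R)$; $D$ is hyperbolic if for some $\delta\ge0$ all geodesic triangles are $\delta$-thin. A self-embedding is an injective $g:V(D)\to V(D)$ with $xy\in E(D)\iff g(x)g(y)\in E(D)$; it is elliptic if $g(F)=F$ for some nonempty finite vertex set $F$. An automorphism is a bijective self-embedding. *)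

theory Defs
  imports Main "HOL-Library.Extended_Nat"
begin

(* A digraph is given by its edge relation E on the vertex type 'a (V(D) = UNIV). *)

definition dwalk :: "('a \<times> 'a) set \<Rightarrow> 'a list \<Rightarrow> bool" where
  "dwalk E p \<longleftrightarrow> p \<noteq> [] \<and> (\<forall>i < length p - 1. (p ! i, p ! Suc i) \<in> E)"

definition dist :: "('a \<times> 'a) set \<Rightarrow> 'a \<Rightarrow> 'a \<Rightarrow> enat" where
  "dist E x y = (INF p \<in> {p. dwalk E p \<and> hd p = x \<and> last p = y}. enat (length p - 1))"

definition geodesic :: "('a \<times> 'a) set \<Rightarrow> 'a list \<Rightarrow> bool" where
  "geodesic E p \<longleftrightarrow> dwalk E p \<and> enat (length p - 1) = dist E (hd p) (last p)"

definition out_ball :: "('a \<times> 'a) set \<Rightarrow> nat \<Rightarrow> 'a set \<Rightarrow> 'a set" where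
  "out_ball E k A = {y. \<exists>x\<in>A. dist E x y \<le> enat k}"

definition in_ball :: "('a \<times> 'a) set \<Rightarrow> nat \<Rightarrow> 'a set \<Rightarrow> 'a set" where
  "in_ball E k A = {y. \<exists>x\<in>A. dist E y x \<le> enat k}"

definition geodesic_triangle :: "('a \<times> 'a) set \<Rightarrow> 'a list \<Rightarrow> 'a list \<Rightarrow> 'a list \<Rightarrow> bool" where
  "geodesic_triangle E P1 P2 P3 \<longleftrightarrow>
     geodesic E P1 \<and> geodesic E P2 \<and> geodesic E P3 \<and>
     (\<exists>x y z. {hd P1, last P1} = {x, y} \<and> {hd P2, last P2} = {y, z} \<and> {hd P3, last P3} = {x, z})"

definition thin_cond :: "('a \<times> 'a) set \<Rightarrow> nat \<Rightarrow> 'a list \<Rightarrow> 'a list \<Rightarrow> 'a list \<Rightarrow> bool" where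
  "thin_cond E \<delta> P Q R \<longleftrightarrow>
     ((hd P = hd Q \<or> hd P = last Q) \<and> (last P = hd R \<or> last P = last R)
      \<longrightarrow> set P \<subseteq> out_ball E \<delta> (set Q) \<union> in_ball E \<delta> (set R))"

definition thin_triangle :: "('a \<times> 'a) set \<Rightarrow> nat \<Rightarrow> 'a list \<Rightarrow> 'a list \<Rightarrow> 'a list \<Rightarrow> bool" where
  "thin_triangle E \<delta> P1 P2 P3 \<longleftrightarrow>
     thin_cond E \<delta> P1 P2 P3 \<and> thin_cond E \<delta> P1 P3 P2 \<and>
     thin_cond E \<delta> P2 P1 P3 \<and> thin_cond E \<delta> P2 P3 P1 \<and>
     thin_cond E \<delta> P3 P1 P2 \<and> thin_cond E \<delta> P3 P2 P1"

definition hyperbolic :: "('a \<times> 'a) set \<Rightarrow> bool" where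
  "hyperbolic E \<longleftrightarrow> (\<exists>\<delta>::nat. \<forall>P1 P2 P3. geodesic_triangle E P1 P2 P3 \<longrightarrow> thin_triangle E \<delta> P1 P2 P3)"

definition rooted :: "('a \<times> 'a) set \<Rightarrow> bool" where
  "rooted E \<longleftrightarrow> (\<exists>r. \<forall>v. dist E r v < \<infinity>)"

definition constant_out_degree :: "('a \<times> 'a) set \<Rightarrow> bool" where
  "constant_out_degree E \<longleftrightarrow> (\<exists>k. \<forall>v. finite {w. (v, w) \<in> E} \<and> card {w. (v, w) \<in> E} = k)"

definition bounded_in_degree :: "('a \<times> 'a) set \<Rightarrow> bool" where
  "bounded_in_degree E \<longleftrightarrow> (\<exists>m. \<forall>v. finite {u. (u, v) \<in> E} \<and> card {u. (u, v) \<in> E} \<le> m)"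

definition self_embedding :: "('a \<times> 'a) set \<Rightarrow> ('a \<Rightarrow> 'a) \<Rightarrow> bool" where
  "self_embedding E g \<longleftrightarrow> inj g \<and> (\<forall>x y. (x, y) \<in> E \<longleftrightarrow> (g x, g y) \<in> E)"

definition elliptic :: "('a \<times> 'a) set \<Rightarrow> ('a \<Rightarrow> 'a) \<Rightarrow> bool" where
  "elliptic E g \<longleftrightarrow> self_embedding E g \<and> (\<exists>F. F \<noteq> {} \<and> finite F \<and> g ` F = F)"

definition automorphism :: "('a \<times> 'a) set \<Rightarrow> ('a \<Rightarrow> 'a) \<Rightarrow> bool" where
  "automorphism E g \<longleftrightarrow> self_embedding E g \<and> bij g"

end

theory Submission
  imports Defs
begin

text \<open>An injective edge-preserving map does not increase
distances, so if it maps a finite nonempty set \<open>F\<close> into itself, the forward orbit of the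
root stays within bounded in-distance of \<open>F\<close>; finite in-degrees make that region finite.
Hence the root is a periodic point of \<open>g\<close> and lies in the image of \<open>g\<close>. Because all
out-degrees are equal and finite, \<open>g\<close> maps the out-neighbourhood of \<open>v\<close> onto that of
\<open>g v\<close>, so the image of \<open>g\<close> is closed under out-edges and, containing the root, is
everything.\<close>

lemma dwalk_Cons:
  "p \<noteq> [] \<Longrightarrow> dwalk E (y # p) \<longleftrightarrow> (y, hd p) \<in> E \<and> dwalk E p"
  unfolding dwalk_def
  by (cases p) (simp, auto simp: less_Suc_eq_0_disj nth_Cons split: nat.splits)

lemma dwalk_map:
  assumes "\<And>x y. (x, y) \<in> E \<Longrightarrow> (h x, h y) \<in> E" and "dwalk E p"
  shows "dwalk E (map h p)"
  using assms unfolding dwalk_def by auto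

lemma dist_le_enat_iff:
  "dist E x y \<le> enat k \<longleftrightarrow> (\<exists>p. dwalk E p \<and> hd p = x \<and> last p = y \<and> length p \<le> Suc k)"
proof
  assume le: "dist E x y \<le> enat k"
  define W where "W = {p. dwalk E p \<and> hd p = x \<and> last p = y}"
  have dist_eq: "dist E x y = (INF p \<in> W. enat (length p - 1))"
    unfolding dist_def W_def ..
  have "W \<noteq> {}"
  proof
    assume "W = {}"
    with le dist_eq show False by (simp add: top_enat_def)
  qed
  then have "dist E x y \<in> (\<lambda>p. enat (length p - 1)) ` W"
    unfolding dist_eq by (blast intro: wellorder_InfI)
  then obtain p where "p \<in> W" "dist E x y = enat (length p - 1)" by blast
  with le show "\<exists>p. dwalk E p \<and> hd p = x \<and> last p = y \<and> length p \<le> Suc k"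
    unfolding W_def by auto
next
  assume "\<exists>p. dwalk E p \<and> hd p = x \<and> last p = y \<and> length p \<le> Suc k"
  then obtain p where p: "dwalk E p" "hd p = x" "last p = y" and len: "length p \<le> Suc k"
    by blast
  then have "dist E x y \<le> enat (length p - 1)" unfolding dist_def by (intro INF_lower) simp
  also have "\<dots> \<le> enat k" using len by simp
  finally show "dist E x y \<le> enat k" .
qed

lemma dist_less_infinityE:
  assumes "dist E x y < \<infinity>"
  obtains p where "dwalk E p" "hd p = x" "last p = y"
  using assms dist_le_enat_iff by (metis less_infinityE order_refl)

lemma dist_map_le:
  assumes "\<And>x y. (x, y) \<in> E \<Longrightarrow> (h x, h y) \<in> E"
  shows "dist E (h x) (h y) \<le> dist E x y"
  unfolding dist_def
proof (rule INF_greatest)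
  fix p assume "p \<in> {p. dwalk E p \<and> hd p = x \<and> last p = y}"
  then have "p \<noteq> []" "dwalk E p" "hd p = x" "last p = y" by (auto simp: dwalk_def)
  then have "map h p \<in> {p. dwalk E p \<and> hd p = h x \<and> last p = h y}"
    using dwalk_map[of E h p] assms by (simp add: hd_map last_map)
  then have "(INF q \<in> {p. dwalk E p \<and> hd p = h x \<and> last p = h y}. enat (length q - 1))
      \<le> enat (length (map h p) - 1)"
    by (rule INF_lower)
  then show "(INF q \<in> {p. dwalk E p \<and> hd p = h x \<and> last p = h y}. enat (length q - 1))
      \<le> enat (length p - 1)"
    by simp
qed

lemma dist_funpow_le:
  assumes "\<And>x y. (x, y) \<in> E \<Longrightarrow> (g x, g y) \<in> E"
  shows "dist E ((g ^^ n) x) ((g ^^ n) y) \<le> dist E x y"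
proof (induction n)
  case (Suc n)
  have "dist E ((g ^^ Suc n) x) ((g ^^ Suc n) y) \<le> dist E ((g ^^ n) x) ((g ^^ n) y)"
    using dist_map_le[OF assms] by simp
  from this Suc.IH show ?case by (rule order_trans)
qed simp

lemma in_ball_Suc_subset:
  "in_ball E (Suc k) A \<subseteq> A \<union> (\<Union>z \<in> in_ball E k A. {u. (u, z) \<in> E})"
proof
  fix y assume "y \<in> in_ball E (Suc k) A"
  then obtain x p where x: "x \<in> A" and p: "dwalk E p" "hd p = y" "last p = x"
    and len: "length p \<le> Suc (Suc k)"
    unfolding in_ball_def dist_le_enat_iff by blast
  show "y \<in> A \<union> (\<Union>z \<in> in_ball E k A. {u. (u, z) \<in> E})"
  proof (cases "tl p = []")
    case True
    with p have "y = x" by (cases p) (auto simp: dwalk_def)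
    with x show ?thesis by blast
  next
    case False
    with p have "p = y # tl p" by (cases p) (auto simp: dwalk_def)
    with p False have "(y, hd (tl p)) \<in> E" "dwalk E (tl p)"
      using dwalk_Cons by metis+
    moreover have "last (tl p) = x" using p False by (simp add: last_tl)
    moreover have "length (tl p) \<le> Suc k" using len by simp
    ultimately have "hd (tl p) \<in> in_ball E k A"
      using x unfolding in_ball_def dist_le_enat_iff by blast
    with \<open>(y, hd (tl p)) \<in> E\<close> show ?thesis by blast
  qed
qed

lemma finite_in_ball:
  assumes "\<And>v. finite {u. (u, v) \<in> E}" and "finite A"
  shows "finite (in_ball E k A)"
proof (induction k)
  case 0
  have "in_ball E 0 A \<subseteq> A"
    unfolding in_ball_def dist_le_enat_iff
    by (auto simp: dwalk_def le_Suc_eq length_Suc_conv)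
  from this assms(2) show ?case by (rule finite_subset)
next
  case (Suc k)
  with assms show ?case by (blast intro: finite_subset[OF in_ball_Suc_subset])
qed

lemma in_range_if_reaches_invariant_set:
  assumes "\<And>v. finite {u. (u, v) \<in> E}" and "self_embedding E g"
    and "finite F" "g ` F \<subseteq> F" "f \<in> F" "dist E x f < \<infinity>"
  shows "x \<in> range g"
proof -
  have "inj g" and edge: "\<And>x y. (x, y) \<in> E \<Longrightarrow> (g x, g y) \<in> E"
    using assms(2) unfolding self_embedding_def by blast+
  obtain k where k: "dist E x f = enat k" using assms(6) by (rule less_infinityE)
  have "(g ^^ n) x \<in> in_ball E k F" for n
  proof -
    have "(g ^^ n) f \<in> F" by (induction n) (use assms(4,5) in auto)
    moreover have "dist E ((g ^^ n) x) ((g ^^ n) f) \<le> enat k"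
      using dist_funpow_le[OF edge, where n=n and x=x and y=f] k by simp
    ultimately show ?thesis unfolding in_ball_def by blast
  qed
  then have "{y. \<exists>n. y = (g ^^ n) x} \<subseteq> in_ball E k F" by blast
  from this finite_in_ball[OF assms(1,3)] have "finite {y. \<exists>n. y = (g ^^ n) x}"
    by (rule finite_subset)
  with \<open>inj g\<close> obtain n where "n > 0" "(g ^^ n) x = x" by (rule funpow_inj_finite)
  then have "x = g ((g ^^ (n - 1)) x)"
    by (metis Suc_diff_1 comp_apply funpow.simps(2))
  then show ?thesis by blast
qed

lemma range_self_embedding_out_closed:
  assumes "constant_out_degree E" "self_embedding E g"
    and "x \<in> range g" "(x, y) \<in> E"
  shows "y \<in> range g"
proof -
  obtain k where k: "\<And>v. finite {w. (v, w) \<in> E} \<and> card {w. (v, w) \<in> E} = k"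
    using assms(1) unfolding constant_out_degree_def by blast
  obtain v where v: "x = g v" using assms(3) by blast
  have "inj g" and edge: "\<And>a b. (a, b) \<in> E \<longleftrightarrow> (g a, g b) \<in> E"
    using assms(2) unfolding self_embedding_def by blast+
  have sub: "g ` {w. (v, w) \<in> E} \<subseteq> {w. (x, w) \<in> E}" using edge v by auto
  have "card (g ` {w. (v, w) \<in> E}) = k"
    using k card_image \<open>inj g\<close> by (metis inj_on_subset subset_UNIV)
  then have "g ` {w. (v, w) \<in> E} = {w. (x, w) \<in> E}"
    using k sub by (metis card_subset_eq)
  with assms(4) show ?thesis by auto
qed

lemma dwalk_last_in_range:
  assumes "constant_out_degree E" "self_embedding E g"
  shows "dwalk E p \<Longrightarrow> hd p \<in> range g \<Longrightarrow> last p \<in> range g"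
proof (induction p)
  case (Cons a p)
  show ?case
  proof (cases "p = []")
    case False
    with Cons.prems have "(a, hd p) \<in> E" "dwalk E p" using dwalk_Cons by metis+
    with Cons.prems have "hd p \<in> range g"
      using range_self_embedding_out_closed[OF assms] by auto
    with Cons.IH \<open>dwalk E p\<close> False show ?thesis by simp
  qed (use Cons.prems in simp)
qed (simp add: dwalk_def)

lemma surj_if_root_in_range:
  assumes "constant_out_degree E" "self_embedding E g"
    and "\<And>v. dist E r v < \<infinity>" "r \<in> range g"
  shows "surj g"
proof -
  have "v \<in> range g" for v
  proof -
    obtain p where "dwalk E p" "hd p = r" "last p = v"
      using assms(3) by (rule dist_less_infinityE)
    with assms show ?thesis using dwalk_last_in_range by blast
  qed
  then show ?thesis by blast
qed

theorem corollary3p15: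
  fixes E :: "('a \<times> 'a) set" and g :: "'a \<Rightarrow> 'a"
  assumes "rooted E" and "hyperbolic E"
    and "constant_out_degree E" and "bounded_in_degree E"
    and "elliptic E g"
  shows "automorphism E g"
proof -
  obtain F where se: "self_embedding E g" and F: "F \<noteq> {}" "finite F" "g ` F = F"
    using assms(5) unfolding elliptic_def by blast
  obtain r where r: "\<And>v. dist E r v < \<infinity>"
    using assms(1) unfolding rooted_def by blast
  have in_fin: "\<And>v. finite {u. (u, v) \<in> E}"
    using assms(4) unfolding bounded_in_degree_def by blast
  obtain f where "f \<in> F" using F(1) by blast
  with in_fin se F(2,3) r have "r \<in> range g"
    by (intro in_range_if_reaches_invariant_set) auto
  with assms(3) se r have "surj g" by (rule surj_if_root_in_range)
  with se show ?thesis
    unfolding automorphism_def self_embedding_def by (simp add: bij_def)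
qed

end
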